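(* Let $\mathcal{D}=(\Omega,\mathcal{B})$ be a supersimple $2$-$(n,4,\lambda)$ design satisfying property $(\triangle)$, such that $(\Omega,\mathcal{C})$ is a regular two-graph where $\mathcal{C}$ is the set of collinear triples, and let $\infty\in\Omega$. Let $x,y,z\in\Omega$ be pairwise distinct. Then: (a) the order of $[x,y]\cdot[y,z]$ is $2$ if $x\in\overline{y,z}$, and $3$ if $x\notin\overline{y,z}$; (b) if $x\notin\overline{y,z}$ then $[z,x,y,z]=[x,y]$; (c) $\mathcal{L}(\mathcal{D})=\mathcal{L}_\infty(\mathcal{D})$ is a group of automorphisms of $\mathcal{D}$.
   Context: A $2$-$(n,4,\lambda)$ design $(\Omega,\mathcal{B})$: $n$ points, a multiset of $4$-subsets (lines), every $2$-subset in exactly $\lambda$ lines; supersimple: distinct lines meet in at most two points. For distinct $a,b$ with lines $\{a,b,a_i,b_i\}$ through them, $[a,b]:=(a,b)\prod_i(a_i,b_i)$; $[a,a]:=1$. Permutations act on the right, products composed left to right; $[a_0,\dots,a_k]:=[a_0,a_1]\cdots[a_{k-1},a_k]$. $\mathcal{L}(\mathcal{D})$ is the set of all move sequences; $\mathcal{L}_\infty(\mathcal{D})$ the set of move sequences starting at $\infty$. $\overline{y,z}$ is the set of points $w$ such that some line contains $y,z,w$. Property $(\triangle)$: if $B_1,B_2\in\mathcal{B}$ with $|B_1\cap B_2|=2$ then $B_1\triangle B_2\in\mathcal{B}$. Regular two-graph: $(\Omega,\mathcal{C})$ is a $2$-$(n,3,\mu)$ design with every $4$-subset containing $0,2$ or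 $4$ members of $\mathcal{C}$. *)

theory Defs
  imports "HOL-Combinatorics.Permutations"
begin

text \<open>Designs: a finite point set Omega and a set of lines (4-subsets).
  Since the design is assumed supersimple, the multiset of lines has no repeated
  members, so it is modelled as a set.\<close>

definition is_2design :: "'a set \<Rightarrow> 'a set set \<Rightarrow> nat \<Rightarrow> nat \<Rightarrow> nat \<Rightarrow> bool" where
  "is_2design Omega Bs n k lam \<longleftrightarrow>
     finite Omega \<and> card Omega = n \<and>
     (\<forall>B\<in>Bs. B \<subseteq> Omega \<and> card B = k) \<and>
     (\<forall>a\<in>Omega. \<forall>b\<in>Omega. a \<noteq> b \<longrightarrow> card {B\<in>Bs. {a, b} \<subseteq> B} = lam)"

definition supersimple :: "'a set set \<Rightarrow> bool" where
  "supersimple Bs \<longleftrightarrow> (\<forall>B1\<in>Bs. \<forall>B2\<in>Bs. B1 \<noteq> B2 \<longrightarrow> card (B1 \<inter> B2) \<le> 2)"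

definition prop_triangle :: "'a set set \<Rightarrow> bool" where
  "prop_triangle Bs \<longleftrightarrow>
     (\<forall>B1\<in>Bs. \<forall>B2\<in>Bs. card (B1 \<inter> B2) = 2 \<longrightarrow> (B1 - B2) \<union> (B2 - B1) \<in> Bs)"

definition collinear_triples :: "'a set \<Rightarrow> 'a set set \<Rightarrow> 'a set set" where
  "collinear_triples Omega Bs = {T. T \<subseteq> Omega \<and> card T = 3 \<and> (\<exists>B\<in>Bs. T \<subseteq> B)}"

definition regular_two_graph :: "'a set \<Rightarrow> 'a set set \<Rightarrow> bool" where
  "regular_two_graph Omega Cs \<longleftrightarrow>
     (\<exists>mu. is_2design Omega Cs (card Omega) 3 mu) \<and>
     (\<forall>F. F \<subseteq> Omega \<and> card F = 4 \<longrightarrow> card {T\<in>Cs. T \<subseteq> F} \<in> {0, 2, 4})"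

definition line_closure :: "'a set set \<Rightarrow> 'a \<Rightarrow> 'a \<Rightarrow> 'a set" where
  "line_closure Bs y z = {w. \<exists>B\<in>Bs. {y, z, w} \<subseteq> B}"

text \<open>The elementary move [a,b] = (a,b) prod_i (a_i,b_i), where {a,b,a_i,b_i} runs over
  the lines through a and b; [a,a] = 1.  Written out pointwise (the transpositions are
  disjoint since the design is supersimple).\<close>
definition move :: "'a set set \<Rightarrow> 'a \<Rightarrow> 'a \<Rightarrow> 'a \<Rightarrow> 'a" where
  "move Bs a b x =
     (if a = b then x
      else if x = a then b
      else if x = b then a
      else if (\<exists>B\<in>Bs. {a, b, x} \<subseteq> B)
        then (THE y. \<exists>B\<in>Bs. {a, b, x} \<subseteq> B \<and> y \<in> B \<and> y \<notin> {a, b, x})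
      else x)"

text \<open>Move sequences [a_0,...,a_k] = [a_0,a_1]...[a_{k-1},a_k]; permutations act on the right
  and products are composed left to right, so as functions g h = h o g.\<close>
fun move_seq :: "'a set set \<Rightarrow> 'a list \<Rightarrow> 'a \<Rightarrow> 'a" where
  "move_seq Bs [] = id"
| "move_seq Bs [a] = id"
| "move_seq Bs (a # b # xs) = move_seq Bs (b # xs) \<circ> move Bs a b"

definition moves_L :: "'a set \<Rightarrow> 'a set set \<Rightarrow> ('a \<Rightarrow> 'a) set" where
  "moves_L Omega Bs = {move_seq Bs (a # xs) | a xs. a \<in> Omega \<and> set xs \<subseteq> Omega}"

definition moves_L_at :: "'a set \<Rightarrow> 'a set set \<Rightarrow> 'a \<Rightarrow> ('a \<Rightarrow> 'a) set" where
  "moves_L_at Omega Bs oo = {move_seq Bs (oo # xs) | xs. set xs \<subseteq> Omega}"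

definition perm_order :: "('a \<Rightarrow> 'a) \<Rightarrow> nat" where
  "perm_order g = (LEAST k. 0 < k \<and> g ^^ k = id)"

definition is_automorphism :: "'a set \<Rightarrow> 'a set set \<Rightarrow> ('a \<Rightarrow> 'a) \<Rightarrow> bool" where
  "is_automorphism Omega Bs g \<longleftrightarrow> g permutes Omega \<and> (\<lambda>B. g ` B) ` Bs = Bs"

definition is_automorphism_group :: "'a set \<Rightarrow> 'a set set \<Rightarrow> ('a \<Rightarrow> 'a) set \<Rightarrow> bool" where
  "is_automorphism_group Omega Bs G \<longleftrightarrow>
     (\<forall>g\<in>G. is_automorphism Omega Bs g) \<and> id \<in> G \<and>
     (\<forall>g\<in>G. \<forall>h\<in>G. h \<circ> g \<in> G) \<and> (\<forall>g\<in>G. inv g \<in> G)"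

end

theory Submission
  imports Defs
begin

text \<open>
  Property (\<triangle>) lets one build new lines as symmetric differences of lines meeting in two points,
  and the two-graph condition (every 4-set carries an even number of collinear triples) supplies
  the collinearities needed to apply it; together they show that every move maps lines to lines.
  Hence conjugating [a,b] by a move g is again a move, namely [g a, g b].
  If x lies on a line {x,y,z,w}, then [y,z] conjugates [x,y] to [w,z] = [x,y], so the product
  has order 2. Otherwise [y,z] and [x,y] both conjugate each other to [x,z], a braid relation
  giving order 3 and [z,x,y,z] = [x,y]. The braid relation also rewrites any move as a move
  sequence starting at any prescribed point, and reversing a move sequence inverts it.
\<close>

lemma move_seq_Cons_append:
  "move_seq Bs (a # xs @ k # ys) = move_seq Bs (k # ys) \<circ> move_seq Bs (a # xs @ [k])"
  by (induction xs arbitrary: a) (auto simp: comp_assoc)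

lemma move_seq_snoc:
  "move_seq Bs (xs @ [k, m]) = move Bs k m \<circ> move_seq Bs (xs @ [k])"
  using move_seq_Cons_append[of Bs _ _ k "[m]"] by (cases xs) auto

lemma move_seq_concat:
  assumes "k = last (a # xs)"
  shows "move_seq Bs (k # ys) \<circ> move_seq Bs (a # xs) = move_seq Bs (a # xs @ ys)"
proof (cases "xs = []")
  case True
  with assms show ?thesis by simp
next
  case False
  then obtain zs where "xs = zs @ [k]"
    using assms by (metis append_butlast_last_id last_ConsR)
  then show ?thesis using move_seq_Cons_append[of Bs a zs k ys] by simp
qed

lemma card_eq_4_obtain:
  assumes "card M = 4" "a \<in> M"
  obtains p q r where "M = {a,p,q,r}" "distinct [a,p,q,r]"
proof -
  have "card (M - {a}) = 3" using assms by simp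
  then obtain p q r where pqr: "M - {a} = {p,q,r}" "p \<noteq> q" "q \<noteq> r" "p \<noteq> r"
    unfolding card_3_iff by blast
  then have "M = {a,p,q,r}" using \<open>a \<in> M\<close> by blast
  moreover have "a \<notin> {p,q,r}" using pqr(1) by blast
  ultimately show ?thesis using pqr that by auto
qed

lemma card_3_subset_of_4:
  assumes "T \<subseteq> {w,x,y,z}" "card T = 3" "distinct [w,x,y,z]"
  shows "T = {w,x,y} \<or> T = {w,x,z} \<or> T = {w,y,z} \<or> T = {x,y,z}"
proof -
  have "\<not> {w,x,y,z} \<subseteq> T"
  proof
    assume "{w,x,y,z} \<subseteq> T"
    with assms have "T = {w,x,y,z}" by auto
    with assms(2,3) show False by simp
  qed
  then consider "T \<subseteq> {x,y,z}" | "T \<subseteq> {w,y,z}" | "T \<subseteq> {w,x,z}" | "T \<subseteq> {w,x,y}"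
    using assms(1) by auto
  then show ?thesis
  proof cases
    case 1 then show ?thesis using card_subset_eq[OF _ 1] assms by auto
  next
    case 2 then show ?thesis using card_subset_eq[OF _ 2] assms by auto
  next
    case 3 then show ?thesis using card_subset_eq[OF _ 3] assms by auto
  next
    case 4 then show ?thesis using card_subset_eq[OF _ 4] assms by auto
  qed
qed

lemma perm_order_eqI:
  assumes "0 < k" "f ^^ k = id" "\<And>j. 0 < j \<Longrightarrow> j < k \<Longrightarrow> f ^^ j \<noteq> id"
  shows "perm_order f = k"
  unfolding perm_order_def by (rule Least_equality) (use assms not_less in auto)

lemma is_automorphism_id: "is_automorphism Omega Bs id"
  unfolding is_automorphism_def by simp

lemma is_automorphism_comp:
  assumes "is_automorphism Omega Bs f" "is_automorphism Omega Bs g"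
  shows "is_automorphism Omega Bs (f \<circ> g)"
proof -
  have "(\<lambda>B. (f \<circ> g) ` B) ` Bs = (\<lambda>B. f ` B) ` ((\<lambda>B. g ` B) ` Bs)"
    by (simp add: image_comp)
  with assms show ?thesis
    unfolding is_automorphism_def by (simp add: permutes_compose)
qed

locale two_graph_design =
  fixes Omega :: "'a set" and Bs :: "'a set set"
  assumes line_subset: "B \<in> Bs \<Longrightarrow> B \<subseteq> Omega"
    and card_line: "B \<in> Bs \<Longrightarrow> card B = 4"
    and supersimple: "supersimple Bs"
    and triangle: "prop_triangle Bs"
    and even_collinear_triples:
      "F \<subseteq> Omega \<Longrightarrow> card F = 4 \<Longrightarrow> card {T \<in> collinear_triples Omega Bs. T \<subseteq> F} \<in> {0,2,4}"

lemma two_graph_designI: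
  assumes "is_2design Omega Bs n 4 lam" "supersimple Bs" "prop_triangle Bs"
    and "regular_two_graph Omega (collinear_triples Omega Bs)"
  shows "two_graph_design Omega Bs"
  using assms unfolding two_graph_design_def is_2design_def regular_two_graph_def by blast

context two_graph_design
begin

definition collinear :: "'a \<Rightarrow> 'a \<Rightarrow> 'a \<Rightarrow> bool" where
  "collinear x y z \<longleftrightarrow> (\<exists>B\<in>Bs. {x,y,z} \<subseteq> B)"

lemma collinear_rotate: "collinear x y z = collinear y z x"
proof -
  have "{x,y,z} = {y,z,x}" by blast
  then show ?thesis unfolding collinear_def by simp
qed

lemma collinearI: "B \<in> Bs \<Longrightarrow> {x,y,z} \<subseteq> B \<Longrightarrow> collinear x y z"
  unfolding collinear_def by blast

lemma collinear_line: "{p,q,r,t} \<in> Bs \<Longrightarrow> collinear p q r"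
  by (rule collinearI) auto

lemma line_unique:
  assumes "B1 \<in> Bs" "B2 \<in> Bs" "{x,y,z} \<subseteq> B1" "{x,y,z} \<subseteq> B2" "distinct [x,y,z]"
  shows "B1 = B2"
proof (rule ccontr)
  assume "B1 \<noteq> B2"
  then have "card (B1 \<inter> B2) \<le> 2"
    using supersimple assms(1,2) unfolding supersimple_def by blast
  moreover have "finite (B1 \<inter> B2)"
    using card_line[OF assms(1)] by (simp add: card_ge_0_finite)
  then have "card {x,y,z} \<le> card (B1 \<inter> B2)"
    using assms(3,4) by (intro card_mono) auto
  ultimately show False using assms(5) by simp
qed

lemma collinear_obtain_line:
  assumes "collinear x y z" "distinct [x,y,z]"
  obtains w where "{x,y,z,w} \<in> Bs" "distinct [x,y,z,w]"
proof -
  obtain B where B: "B \<in> Bs" "{x,y,z} \<subseteq> B" using assms(1) unfolding collinear_def by blast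
  then have "card (B - {x,y,z}) = 1"
    using assms(2) card_line[OF B(1)] by (simp add: card_Diff_subset)
  then obtain w where w: "B - {x,y,z} = {w}" by (rule card_1_singletonE)
  then have "B = {x,y,z,w}" using B(2) by auto
  with w B(1) assms(2) that show ?thesis by auto
qed

lemma line_symmetric_difference:
  assumes "B1 \<in> Bs" "B2 \<in> Bs" "distinct [x,y,c,d,e,f]" "B1 = {x,y,c,d}" "B2 = {x,y,e,f}"
  shows "{c,d,e,f} \<in> Bs"
proof -
  have "B1 \<inter> B2 = {x,y}" using assms(3-5) by auto
  then have "card (B1 \<inter> B2) = 2" using assms(3) by simp
  then have "(B1 - B2) \<union> (B2 - B1) \<in> Bs"
    using triangle assms(1,2) unfolding prop_triangle_def by blast
  moreover have "(B1 - B2) \<union> (B2 - B1) = {c,d,e,f}" using assms(3-5) by auto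
  ultimately show ?thesis by simp
qed

lemma collinear_parity:
  assumes "distinct [w,x,y,z]" "{w,x,y,z} \<subseteq> Omega"
  shows "collinear w x y \<longleftrightarrow> (collinear w x z \<longleftrightarrow> (collinear w y z \<longleftrightarrow> collinear x y z))"
proof -
  let ?C = "collinear_triples Omega Bs"
  let ?As = "{{w,x,y},{w,x,z},{w,y,z},{x,y,z}}"
  have four: "card {w,x,y,z} = 4" using assms(1) by simp
  have "T \<in> ?As" if "T \<in> ?C" "T \<subseteq> {w,x,y,z}" for T
    using card_3_subset_of_4[OF that(2) _ assms(1)] that(1) unfolding collinear_triples_def by simp
  moreover have "T \<subseteq> {w,x,y,z}" if "T \<in> ?As" for T
    using that by auto
  ultimately have "{T \<in> ?C. T \<subseteq> {w,x,y,z}} = {T \<in> ?As. T \<in> ?C}"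
    by (intro Collect_cong) meson
  moreover have "card {T \<in> ?As. T \<in> ?C} = (\<Sum>T\<in>?As. if T \<in> ?C then 1 else 0)"
    by (simp add: sum.inter_filter[symmetric])
  ultimately have "(\<Sum>T\<in>?As. if T \<in> ?C then 1 else 0) \<in> {0,2,4::nat}"
    using even_collinear_triples[OF assms(2) four] by (simp only:)
  moreover have "{w,x,y} \<noteq> {w,x,z}" "{w,x,y} \<noteq> {w,y,z}" "{w,x,y} \<noteq> {x,y,z}"
    "{w,x,z} \<noteq> {w,y,z}" "{w,x,z} \<noteq> {x,y,z}" "{w,y,z} \<noteq> {x,y,z}"
    using assms(1) by auto
  moreover have "{w,x,y} \<in> ?C \<longleftrightarrow> collinear w x y" "{w,x,z} \<in> ?C \<longleftrightarrow> collinear w x z"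
    "{w,y,z} \<in> ?C \<longleftrightarrow> collinear w y z" "{x,y,z} \<in> ?C \<longleftrightarrow> collinear x y z"
    using assms unfolding collinear_triples_def collinear_def by auto
  ultimately have "(if collinear w x y then 1 else 0) + ((if collinear w x z then 1 else 0)
      + ((if collinear w y z then 1 else 0) + (if collinear x y z then 1 else 0))) \<in> {0,2,4::nat}"
    by simp
  then show ?thesis
    by (cases "collinear w x y"; cases "collinear w x z"; cases "collinear w y z";
        cases "collinear x y z") simp_all
qed

lemma move_left: "move Bs a b a = b" and move_right: "move Bs a b b = a"
  by (auto simp: move_def)

lemma move_self: "move Bs a a = id"
  by (auto simp: move_def)

lemma move_commute: "move Bs a b = move Bs b a"
proof
  fix x
  have swap: "{a,b,x} = {b,a,x}" by blast
  show "move Bs a b x = move Bs b a x" unfolding move_def swap by auto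
qed

lemma move_line:
  assumes "{a,b,c,d} \<in> Bs" "distinct [a,b,c,d]"
  shows "move Bs a b c = d"
proof -
  have "(THE y. \<exists>B\<in>Bs. {a,b,c} \<subseteq> B \<and> y \<in> B \<and> y \<notin> {a,b,c}) = d"
  proof (rule the_equality)
    show "\<exists>B\<in>Bs. {a,b,c} \<subseteq> B \<and> d \<in> B \<and> d \<notin> {a,b,c}"
      using assms by (intro bexI[of _ "{a,b,c,d}"]) auto
  next
    fix y assume "\<exists>B\<in>Bs. {a,b,c} \<subseteq> B \<and> y \<in> B \<and> y \<notin> {a,b,c}"
    then obtain B where B: "B \<in> Bs" "{a,b,c} \<subseteq> B" "y \<in> B" "y \<notin> {a,b,c}" by blast
    have "B = {a,b,c,d}" by (rule line_unique[OF B(1) assms(1) B(2)]) (use assms in auto)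
    with B show "y = d" by auto
  qed
  moreover have distinct: "a \<noteq> b" "c \<noteq> a" "c \<noteq> b" using assms(2) by auto
  moreover have "\<exists>B\<in>Bs. {a,b,c} \<subseteq> B" using assms(1) by (intro bexI) auto
  ultimately show ?thesis unfolding move_def by (simp only: distinct if_True if_False)
qed

lemma move_fixed: "x \<noteq> a \<Longrightarrow> x \<noteq> b \<Longrightarrow> \<not> collinear a b x \<Longrightarrow> move Bs a b x = x"
  by (auto simp: move_def collinear_def)

lemma move_collinear:
  assumes "collinear a b x" "distinct [a,b,x]"
  shows "{a,b,x,move Bs a b x} \<in> Bs" "distinct [a,b,x,move Bs a b x]"
proof -
  obtain w where "{a,b,x,w} \<in> Bs" "distinct [a,b,x,w]"
    using collinear_obtain_line[OF assms] .
  moreover from this have "move Bs a b x = w" by (rule move_line)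
  ultimately show "{a,b,x,move Bs a b x} \<in> Bs" "distinct [a,b,x,move Bs a b x]" by simp_all
qed

lemma move_move [simp]: "move Bs a b (move Bs a b x) = x"
proof (cases "a = b \<or> x = a \<or> x = b")
  case True
  then show ?thesis by (auto simp: move_def)
next
  case False
  show ?thesis
  proof (cases "collinear a b x")
    case True
    have "{a,b,move Bs a b x,x} = {a,b,x,move Bs a b x}" by blast
    with True False have "{a,b,move Bs a b x,x} \<in> Bs" "distinct [a,b,move Bs a b x,x]"
      using move_collinear[of a b x] by auto
    then show ?thesis by (rule move_line)
  next
    case False
    with \<open>\<not> (a = b \<or> x = a \<or> x = b)\<close> show ?thesis by (simp add: move_fixed)
  qed
qed

lemma move_eq_iff: "move Bs a b x = move Bs a b y \<longleftrightarrow> x = y"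
  by (metis move_move)

lemma move_permutes:
  assumes "a \<in> Omega" "b \<in> Omega"
  shows "move Bs a b permutes Omega"
proof -
  have "move Bs a b x = x" if "x \<notin> Omega" for x
    using assms that line_subset unfolding move_def by auto
  then show ?thesis unfolding permutes_def by (metis move_move)
qed

context
  fixes a b
  assumes a_in: "a \<in> Omega" and b_in: "b \<in> Omega" and a_neq_b: "a \<noteq> b"
begin

abbreviation \<sigma> where "\<sigma> \<equiv> move Bs a b"

text \<open>As p and q agree, parity makes b collinear with p and q; (\<triangle>) applied to that
  line and {a,p,q,r} gives a line through a, b and r.\<close>
lemma collinear_third_of_line_through_left:
  assumes M: "{a,p,q,r} \<in> Bs" "distinct [a,p,q,r]" and b_notin: "b \<notin> {p,q,r}"
    and agree: "collinear a b p = collinear a b q"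
  shows "collinear a b r"
proof -
  have "distinct [a,b,p,q]" using M(2) b_notin a_neq_b by auto
  moreover have "{a,b,p,q} \<subseteq> Omega" using line_subset[OF M(1)] a_in b_in by auto
  ultimately have "collinear a b p \<longleftrightarrow> (collinear a b q \<longleftrightarrow> (collinear a p q \<longleftrightarrow> collinear b p q))"
    by (rule collinear_parity)
  with agree collinear_line[OF M(1)] have "collinear b p q" by blast
  moreover have "distinct [b,p,q]" using M(2) b_notin by auto
  ultimately obtain s where s: "{b,p,q,s} \<in> Bs" "distinct [b,p,q,s]"
    by (rule collinear_obtain_line)
  have "s \<noteq> a"
  proof
    assume "s = a"
    then have "{b,p,q,s} = {a,p,q,r}" by (intro line_unique[of _ _ a p q]) (use s M in auto)
    with b_notin a_neq_b show False by blast
  qed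
  moreover have "s \<noteq> r"
  proof
    assume "s = r"
    then have "{b,p,q,s} = {a,p,q,r}" by (intro line_unique[of _ _ p q r]) (use s M in auto)
    with b_notin a_neq_b show False by blast
  qed
  ultimately have "distinct [p,q,b,s,a,r]" using s(2) M(2) b_notin a_neq_b by auto
  with s(1) M(1) have "{b,s,a,r} \<in> Bs" by (rule line_symmetric_difference) auto
  then show ?thesis by (rule collinearI) auto
qed

lemma collinear_with_line_through_left_odd:
  assumes M: "{a,p,q,r} \<in> Bs" "distinct [a,p,q,r]" and b_notin: "b \<notin> {p,q,r}"
  shows "collinear a b p \<longleftrightarrow> (collinear a b q \<longleftrightarrow> collinear a b r)"
proof -
  have "{a,q,r,p} = {a,p,q,r}" "{a,r,p,q} = {a,p,q,r}" by blast+
  then have M': "{a,q,r,p} \<in> Bs" "{a,r,p,q} \<in> Bs" using M(1) by simp_all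
  have d': "distinct [a,q,r,p]" "distinct [a,r,p,q]" using M(2) by auto
  have b': "b \<notin> {q,r,p}" "b \<notin> {r,p,q}" using b_notin by auto
  have "collinear a b p = collinear a b q \<Longrightarrow> collinear a b r"
    by (rule collinear_third_of_line_through_left[OF M b_notin])
  moreover have "collinear a b q = collinear a b r \<Longrightarrow> collinear a b p"
    by (rule collinear_third_of_line_through_left[OF M'(1) d'(1) b'(1)])
  moreover have "collinear a b r = collinear a b p \<Longrightarrow> collinear a b q"
    by (rule collinear_third_of_line_through_left[OF M'(2) d'(2) b'(2)])
  ultimately show ?thesis by blast
qed

lemma move_not_in_line:
  assumes "M \<in> Bs" "a \<in> M" "b \<notin> M" "t \<in> M" "t \<noteq> a" "collinear a b t"
  shows "\<sigma> t \<notin> M"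
proof
  assume "\<sigma> t \<in> M"
  have "{a,b,t,\<sigma> t} \<in> Bs" "distinct [a,b,t,\<sigma> t]"
    using move_collinear[of a b t] assms a_neq_b by auto
  with assms \<open>\<sigma> t \<in> M\<close> have "{a,b,t,\<sigma> t} = M" by (intro line_unique[of _ _ a t "\<sigma> t"]) auto
  with assms show False by blast
qed

lemma move_image_line_through_left_one_flip:
  assumes M: "{a,p,q,r} \<in> Bs" "distinct [a,p,q,r]" and b_notin: "b \<notin> {p,q,r}"
    and col: "collinear a b p" "\<not> collinear a b q" "\<not> collinear a b r"
  shows "\<sigma> ` {a,p,q,r} \<in> Bs"
proof -
  have N: "{a,b,p,\<sigma> p} \<in> Bs" "distinct [a,b,p,\<sigma> p]"
    using move_collinear[OF col(1)] M(2) b_notin a_neq_b by auto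
  have "\<sigma> p \<notin> {a,p,q,r}" by (rule move_not_in_line) (use M b_notin col a_neq_b in auto)
  then have "distinct [a,p,b,\<sigma> p,q,r]" using N(2) M(2) b_notin by auto
  with N(1) M(1) have "{b,\<sigma> p,q,r} \<in> Bs" by (rule line_symmetric_difference) auto
  moreover have "\<sigma> ` {a,p,q,r} = {b,\<sigma> p,q,r}"
    using move_left[of a b] move_fixed[of q a b] move_fixed[of r a b] M(2) b_notin col by auto
  ultimately show ?thesis by simp
qed

text \<open>Flip p, q, r one at a time; each step applies (\<triangle>) to the current line and a line
  {a,b,t,\<sigma> t}, alternately through a and through b.\<close>
lemma move_image_line_through_left_three_flips:
  assumes M: "{a,p,q,r} \<in> Bs" "distinct [a,p,q,r]" and b_notin: "b \<notin> {p,q,r}"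
    and col: "collinear a b p" "collinear a b q" "collinear a b r"
  shows "\<sigma> ` {a,p,q,r} \<in> Bs"
proof -
  have Np: "{a,b,p,\<sigma> p} \<in> Bs" "distinct [a,b,p,\<sigma> p]"
    using move_collinear[OF col(1)] M(2) b_notin a_neq_b by auto
  have Nq: "{a,b,q,\<sigma> q} \<in> Bs" "distinct [a,b,q,\<sigma> q]"
    using move_collinear[OF col(2)] M(2) b_notin a_neq_b by auto
  have Nr: "{a,b,r,\<sigma> r} \<in> Bs" "distinct [a,b,r,\<sigma> r]"
    using move_collinear[OF col(3)] M(2) b_notin a_neq_b by auto
  have "\<sigma> p \<notin> {a,p,q,r}" "\<sigma> q \<notin> {a,p,q,r}" "\<sigma> r \<notin> {a,p,q,r}"
    by (rule move_not_in_line; use M b_notin col a_neq_b in auto)+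
  moreover have "distinct [\<sigma> p, \<sigma> q, \<sigma> r]" using M(2) by (auto simp: move_eq_iff)
  ultimately have d: "distinct [a,p,b,\<sigma> p,q,r]" "distinct [b,q,a,\<sigma> q,\<sigma> p,r]"
    "distinct [a,r,b,\<sigma> r,\<sigma> q,\<sigma> p]"
    using Np(2) Nq(2) Nr(2) M(2) b_notin by auto
  from Np(1) M(1) d(1) have "{b,\<sigma> p,q,r} \<in> Bs" by (rule line_symmetric_difference) auto
  from Nq(1) this d(2) have "{a,\<sigma> q,\<sigma> p,r} \<in> Bs" by (rule line_symmetric_difference) auto
  from Nr(1) this d(3) have "{b,\<sigma> r,\<sigma> q,\<sigma> p} \<in> Bs" by (rule line_symmetric_difference) auto
  moreover have "\<sigma> ` {a,p,q,r} = {b,\<sigma> r,\<sigma> q,\<sigma> p}" using move_left[of a b] by auto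
  ultimately show ?thesis by simp
qed

lemma move_image_line_through_both:
  assumes "M \<in> Bs" "a \<in> M" "b \<in> M"
  shows "\<sigma> ` M = M"
proof -
  have "card (M - {a,b}) = 2" using card_line[OF assms(1)] assms a_neq_b by (simp add: card_Diff_subset)
  then obtain c d where cd: "M - {a,b} = {c,d}" "c \<noteq> d" unfolding card_2_iff by blast
  then have M: "M = {a,b,c,d}" "distinct [a,b,c,d]" using assms a_neq_b by auto
  have "{a,b,d,c} = M" using M(1) by blast
  then have "\<sigma> c = d" "\<sigma> d = c" using move_line assms(1) M by auto
  with M(1) show ?thesis using move_left[of a b] move_right[of a b] by auto
qed

lemma move_image_line_through_left:
  assumes "M \<in> Bs" "a \<in> M"
  shows "\<sigma> ` M \<in> Bs"
proof (cases "b \<in> M")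
  case True
  with assms show ?thesis by (simp add: move_image_line_through_both)
next
  case False
  obtain p q r where M: "M = {a,p,q,r}" "distinct [a,p,q,r]"
    using card_eq_4_obtain[OF card_line[OF assms(1)] assms(2)] .
  with assms(1) False have line: "{a,p,q,r} \<in> Bs" and b_notin: "b \<notin> {p,q,r}" by auto
  from collinear_with_line_through_left_odd[OF line M(2) b_notin]
  consider "collinear a b p" "\<not> collinear a b q" "\<not> collinear a b r"
    | "collinear a b q" "\<not> collinear a b p" "\<not> collinear a b r"
    | "collinear a b r" "\<not> collinear a b p" "\<not> collinear a b q"
    | "collinear a b p" "collinear a b q" "collinear a b r"
    by blast
  then show ?thesis
  proof cases
    case 1
    with line M(2) b_notin have "\<sigma> ` {a,p,q,r} \<in> Bs"
      by (rule move_image_line_through_left_one_flip)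
    with M(1) show ?thesis by simp
  next
    case 2
    have "{a,q,p,r} = M" using M(1) by blast
    moreover from this 2 have "\<sigma> ` {a,q,p,r} \<in> Bs"
      by (intro move_image_line_through_left_one_flip) (use assms(1) M(2) b_notin in auto)
    ultimately show ?thesis by simp
  next
    case 3
    have "{a,r,p,q} = M" using M(1) by blast
    moreover from this 3 have "\<sigma> ` {a,r,p,q} \<in> Bs"
      by (intro move_image_line_through_left_one_flip) (use assms(1) M(2) b_notin in auto)
    ultimately show ?thesis by simp
  next
    case 4
    with line M(2) b_notin have "\<sigma> ` {a,p,q,r} \<in> Bs"
      by (rule move_image_line_through_left_three_flips)
    with M(1) show ?thesis by simp
  qed
qed

text \<open>The line is the symmetric difference of two lines through a, whose images are lines.\<close>
lemma move_image_line_avoiding_of_collinear: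
  assumes M: "{p,q,r,t} \<in> Bs" "distinct [p,q,r,t]" and notin: "a \<notin> {p,q,r,t}" "b \<notin> {p,q,r,t}"
    and col: "collinear a p q"
  shows "\<sigma> ` {p,q,r,t} \<in> Bs"
proof -
  have "distinct [a,p,q]" using M(2) notin by auto
  with col obtain u where K: "{a,p,q,u} \<in> Bs" "distinct [a,p,q,u]"
    by (rule collinear_obtain_line)
  have "u \<noteq> r"
  proof
    assume "u = r"
    then have "{a,p,q,u} = {p,q,r,t}" by (intro line_unique[of _ _ p q r]) (use K M in auto)
    with notin show False by blast
  qed
  moreover have "u \<noteq> t"
  proof
    assume "u = t"
    then have "{a,p,q,u} = {p,q,r,t}" by (intro line_unique[of _ _ p q t]) (use K M in auto)
    with notin show False by blast
  qed
  ultimately have d: "distinct [a,u,p,q,r,t]" using K(2) M(2) notin by auto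
  then have "distinct [p,q,a,u,r,t]" by auto
  with K(1) M(1) have K': "{a,u,r,t} \<in> Bs" by (rule line_symmetric_difference) auto
  have "\<sigma> ` {a,p,q,u} \<in> Bs" by (rule move_image_line_through_left[OF K(1)]) simp
  moreover have "\<sigma> ` {a,u,r,t} \<in> Bs" by (rule move_image_line_through_left[OF K']) simp
  moreover have "distinct (map \<sigma> [a,u,p,q,r,t])"
    using d by (simp add: distinct_map inj_on_def move_eq_iff)
  then have "distinct [b, \<sigma> u, \<sigma> p, \<sigma> q, \<sigma> r, \<sigma> t]" by (simp add: move_left)
  ultimately have "{\<sigma> p, \<sigma> q, \<sigma> r, \<sigma> t} \<in> Bs"
    by (rule line_symmetric_difference) (auto simp: move_left)
  then show ?thesis by simp
qed

lemma move_image_line_avoiding: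
  assumes "M \<in> Bs" "a \<notin> M" "b \<notin> M"
  shows "\<sigma> ` M \<in> Bs"
proof -
  obtain p where "p \<in> M" using card_line[OF assms(1)] by fastforce
  then obtain q r t where M: "M = {p,q,r,t}" "distinct [p,q,r,t]"
    using card_eq_4_obtain card_line[OF assms(1)] by metis
  with assms have line: "{p,q,r,t} \<in> Bs" and notin: "a \<notin> {p,q,r,t}" "b \<notin> {p,q,r,t}" by auto
  have "distinct [a,p,q,r]" "{a,p,q,r} \<subseteq> Omega" using M notin line_subset[OF assms(1)] a_in by auto
  then consider "collinear a p q" | "collinear a p r" | "collinear a q r"
    using collinear_parity collinear_line[OF line] by blast
  then show ?thesis
  proof cases
    case 1
    with line M(2) notin have "\<sigma> ` {p,q,r,t} \<in> Bs"
      by (rule move_image_line_avoiding_of_collinear)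
    with M(1) show ?thesis by simp
  next
    case 2
    have "{p,r,q,t} = M" using M(1) by blast
    moreover from this 2 have "\<sigma> ` {p,r,q,t} \<in> Bs"
      by (intro move_image_line_avoiding_of_collinear) (use assms(1) M(2) notin in auto)
    ultimately show ?thesis by simp
  next
    case 3
    have "{q,r,p,t} = M" using M(1) by blast
    moreover from this 3 have "\<sigma> ` {q,r,p,t} \<in> Bs"
      by (intro move_image_line_avoiding_of_collinear) (use assms(1) M(2) notin in auto)
    ultimately show ?thesis by simp
  qed
qed

end

lemma move_image_line:
  assumes "a \<in> Omega" "b \<in> Omega" "M \<in> Bs"
  shows "move Bs a b ` M \<in> Bs"
proof -
  consider "a = b" | "a \<noteq> b" "a \<in> M" | "a \<noteq> b" "b \<in> M" | "a \<notin> M" "b \<notin> M" by blast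
  then show ?thesis
  proof cases
    case 1
    with assms show ?thesis by (simp add: move_self)
  next
    case 2
    with assms show ?thesis by (simp add: move_image_line_through_left)
  next
    case 3
    with assms show ?thesis by (simp add: move_commute[of a b] move_image_line_through_left)
  next
    case 4
    with assms show ?thesis by (cases "a = b") (simp_all add: move_self move_image_line_avoiding)
  qed
qed

lemma move_automorphism:
  assumes "a \<in> Omega" "b \<in> Omega"
  shows "is_automorphism Omega Bs (move Bs a b)"
proof -
  have "(\<lambda>B. move Bs a b ` B) ` Bs \<subseteq> Bs" using move_image_line[OF assms] by blast
  moreover have "B \<in> (\<lambda>B. move Bs a b ` B) ` Bs" if "B \<in> Bs" for B
  proof
    show "B = move Bs a b ` move Bs a b ` B" by (simp add: image_image)
  qed (rule move_image_line[OF assms that])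
  ultimately show ?thesis using move_permutes[OF assms] unfolding is_automorphism_def by blast
qed

lemma move_conjugate:
  assumes g_inv: "\<And>t. g (g t) = t" and g_line: "\<And>B. B \<in> Bs \<Longrightarrow> g ` B \<in> Bs"
  shows "g (move Bs a b (g x)) = move Bs (g a) (g b) x"
proof -
  have g_eq: "g s = g t \<longleftrightarrow> s = t" for s t by (metis g_inv)
  have g_col: "collinear (g p) (g q) (g r)" if col: "collinear p q r" for p q r
  proof -
    obtain B where "B \<in> Bs" "{p,q,r} \<subseteq> B" using col unfolding collinear_def by blast
    then have "g ` B \<in> Bs" "{g p, g q, g r} \<subseteq> g ` B" using g_line by auto
    then show ?thesis by (rule collinearI)
  qed
  consider "a = b" | "x = g a" | "x = g b" | "distinct [a,b,g x]"
    using g_inv by (metis distinct_length_2_or_more distinct_singleton)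
  then show ?thesis
  proof cases
    case 1
    then show ?thesis by (simp add: move_self g_inv)
  next
    case 2
    then show ?thesis by (simp add: g_inv move_left)
  next
    case 3
    then show ?thesis by (simp add: g_inv move_right)
  next
    case d: 4
    show ?thesis
    proof (cases "collinear a b (g x)")
      case True
      let ?d = "move Bs a b (g x)"
      from move_collinear[OF True d] have "g ` {a,b,g x,?d} \<in> Bs" "distinct (map g [a,b,g x,?d])"
        by (simp_all only: g_line) (auto simp: g_eq)
      then have "{g a, g b, x, g ?d} \<in> Bs" "distinct [g a, g b, x, g ?d]" by (simp_all add: g_inv)
      then show ?thesis by (simp add: move_line)
    next
      case False
      then have "\<not> collinear (g a) (g b) x" using g_col[of "g a" "g b" x] g_inv by auto
      moreover have "x \<noteq> g a" "x \<noteq> g b" using d g_inv by auto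
      ultimately have "move Bs (g a) (g b) x = x" by (intro move_fixed)
      moreover have "move Bs a b (g x) = g x" using d False by (intro move_fixed) auto
      ultimately show ?thesis by (simp add: g_inv)
    qed
  qed
qed

lemma move_conjugate_move:
  assumes "c \<in> Omega" "d \<in> Omega"
  shows "move Bs c d (move Bs a b (move Bs c d t)) = move Bs (move Bs c d a) (move Bs c d b) t"
  by (rule move_conjugate) (simp_all add: move_image_line[OF assms])

lemma move_opposite_pair:
  assumes B: "{x,y,z,w} \<in> Bs" "distinct [x,y,z,w]" and t: "t \<notin> {x,y,z,w}" "collinear x y t"
  shows "collinear z w t" "move Bs z w t = move Bs x y t"
proof -
  let ?t' = "move Bs x y t"
  have N: "{x,y,t,?t'} \<in> Bs" "distinct [x,y,t,?t']" using move_collinear[OF t(2)] B t by auto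
  have "?t' \<noteq> z"
  proof
    assume "?t' = z"
    then have "{x,y,t,?t'} = {x,y,z,w}" by (intro line_unique[of _ _ x y z]) (use N B in auto)
    with t N show False by blast
  qed
  moreover have "?t' \<noteq> w"
  proof
    assume "?t' = w"
    then have "{x,y,t,?t'} = {x,y,z,w}" by (intro line_unique[of _ _ x y w]) (use N B in auto)
    with t N show False by blast
  qed
  ultimately have "distinct [x,y,z,w,t,?t']" using B(2) N(2) t(1) by auto
  with B(1) N(1) have L: "{z,w,t,?t'} \<in> Bs" by (rule line_symmetric_difference) auto
  then show "collinear z w t" by (rule collinear_line)
  show "move Bs z w t = ?t'" by (rule move_line[OF L]) (use \<open>distinct [x,y,z,w,t,?t']\<close> in auto)
qed

lemma move_eq_of_line:
  assumes B: "{x,y,z,w} \<in> Bs" "distinct [x,y,z,w]"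
  shows "move Bs x y = move Bs z w"
proof
  fix t
  have B': "{z,w,x,y} \<in> Bs" using B(1) by (simp add: insert_commute)
  have d': "distinct [z,w,x,y]" using B(2) by auto
  show "move Bs x y t = move Bs z w t"
  proof (cases "t \<in> {x,y,z,w}")
    case True
    have "{z,w,y,x} \<in> Bs" "{x,y,w,z} \<in> Bs" using B(1) by (simp_all add: insert_commute)
    moreover have "distinct [z,w,y,x]" "distinct [x,y,w,z]" using B(2) by auto
    ultimately show ?thesis
      using True move_line[OF B] move_line[OF B' d'] move_line[of z w y x] move_line[of x y w z]
      by (auto simp: move_left move_right)
  next
    case False
    then have t': "t \<notin> {z,w,x,y}" by blast
    show ?thesis
    proof (cases "collinear x y t")
      case True
      then show ?thesis using move_opposite_pair(2)[OF B False] by simp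
    next
      case col: False
      then have "\<not> collinear z w t" using move_opposite_pair(1)[OF B' d' t'] by blast
      with col False show ?thesis by (simp add: move_fixed)
    qed
  qed
qed

lemma perm_order_moves_collinear:
  assumes in_Omega: "y \<in> Omega" "z \<in> Omega" and d: "distinct [x,y,z]" and col: "collinear y z x"
  shows "perm_order (move Bs y z \<circ> move Bs x y) = 2"
proof -
  have "distinct [y,z,x]" using d by auto
  with col obtain w where L: "{y,z,x,w} \<in> Bs" "distinct [y,z,x,w]" by (rule collinear_obtain_line)
  then have yz_x: "move Bs y z x = w" by (rule move_line)
  have "{x,y,z,w} = {y,z,x,w}" by blast
  with L have "move Bs x y = move Bs z w" by (intro move_eq_of_line) auto
  then have commute: "move Bs y z (move Bs x y (move Bs y z t)) = move Bs x y t" for t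
    using move_conjugate_move[OF in_Omega, of x y t] yz_x by (simp add: move_left move_commute[of w])
  let ?f = "move Bs y z \<circ> move Bs x y"
  show ?thesis
  proof (rule perm_order_eqI)
    have "(?f ^^ 2) t = t" for t
      using commute[of "move Bs x y t"] by (simp add: numeral_2_eq_2)
    then show "?f ^^ 2 = id" by (simp add: fun_eq_iff)
  next
    fix j :: nat assume "0 < j" "j < 2"
    then have "j = 1" by simp
    then have "(?f ^^ j) x = z" by (simp add: move_left)
    with d show "?f ^^ j \<noteq> id" by auto
  qed simp
qed

lemma move_braid:
  assumes in_Omega: "x \<in> Omega" "y \<in> Omega" "z \<in> Omega" and d: "distinct [x,y,z]"
    and not_col: "\<not> collinear y z x"
  shows "move Bs x y (move Bs y z (move Bs x y t)) = move Bs x z t"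
    and "move Bs y z (move Bs x y (move Bs y z t)) = move Bs x z t"
proof -
  have "\<not> collinear x y z" using not_col collinear_rotate by metis
  then have "move Bs x y z = z" using d by (intro move_fixed) auto
  then show "move Bs x y (move Bs y z (move Bs x y t)) = move Bs x z t"
    using move_conjugate_move[OF in_Omega(1,2), of y z t] by (simp add: move_right)
  have "move Bs y z x = x" using d not_col by (intro move_fixed) auto
  then show "move Bs y z (move Bs x y (move Bs y z t)) = move Bs x z t"
    using move_conjugate_move[OF in_Omega(2,3), of x y t] by (simp add: move_left)
qed

lemma perm_order_moves_not_collinear:
  assumes "x \<in> Omega" "y \<in> Omega" "z \<in> Omega" and d: "distinct [x,y,z]" "\<not> collinear y z x"
  shows "perm_order (move Bs y z \<circ> move Bs x y) = 3"
proof -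
  note braid = move_braid[OF assms]
  let ?f = "move Bs y z \<circ> move Bs x y"
  have fx: "?f x = z" by (simp add: move_left)
  have "\<not> collinear x y z" using d(2) collinear_rotate by metis
  then have "move Bs x y z = z" using d(1) by (intro move_fixed) auto
  then have ffx: "?f (?f x) = y" unfolding fx by (simp add: move_right)
  show ?thesis
  proof (rule perm_order_eqI)
    have "(?f ^^ 3) t = move Bs x z (move Bs x z t)" for t
      using braid(2)[of "move Bs x y (move Bs y z (move Bs x y t))"] braid(1)[of t]
      by (simp add: numeral_3_eq_3)
    then show "?f ^^ 3 = id" by (simp add: fun_eq_iff)
  next
    fix j :: nat assume "0 < j" "j < 3"
    then have "j = 1 \<or> j = 2" by auto
    then have "(?f ^^ j) x \<noteq> x" using fx ffx d by (auto simp: numeral_2_eq_2)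
    then show "?f ^^ j \<noteq> id" by auto
  qed simp
qed

lemma move_seq_braid:
  assumes "x \<in> Omega" "y \<in> Omega" "z \<in> Omega" and "distinct [x,y,z]" "\<not> collinear y z x"
  shows "move_seq Bs [z, x, y, z] = move Bs x y"
proof
  fix t
  have "move_seq Bs [z, x, y, z] t = move Bs y z (move Bs x y (move Bs x z t))"
    by (simp add: move_commute[of z x])
  also have "\<dots> = move Bs x y t"
    using move_braid(1)[OF assms, of t, symmetric] by simp
  finally show "move_seq Bs [z, x, y, z] t = move Bs x y t" .
qed

text \<open>By the braid relation a move [c,d] can be rewritten to start at any point e: as [e,w] if e
  lies on a line {c,d,e,w}, and as [e,c,d,e] otherwise.\<close>
lemma move_eq_move_seq_from:
  assumes "c \<in> Omega" "d \<in> Omega" "e \<in> Omega"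
  obtains ys where "set ys \<subseteq> Omega" "move Bs c d = move_seq Bs (e # ys)"
proof -
  consider "c = d" | "e = c" | "e = d" | "distinct [c,d,e]" by force
  then show ?thesis
  proof cases
    case 1
    then show ?thesis using that[of "[]"] by (simp add: move_self)
  next
    case 2
    then show ?thesis using that[of "[d]"] assms by simp
  next
    case 3
    then show ?thesis using that[of "[c]"] assms by (simp add: move_commute)
  next
    case d: 4
    show ?thesis
    proof (cases "collinear d e c")
      case True
      have "distinct [d,e,c]" using d by auto
      with True obtain w where L: "{d,e,c,w} \<in> Bs" "distinct [d,e,c,w]"
        by (rule collinear_obtain_line)
      have "{c,d,e,w} = {d,e,c,w}" by blast
      with L have "move Bs c d = move Bs e w" by (intro move_eq_of_line) auto
      moreover have "w \<in> Omega" using line_subset[OF L(1)] by simp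
      ultimately show ?thesis using that[of "[w]"] by simp
    next
      case False
      then show ?thesis using move_seq_braid[OF assms d False] that[of "[c,d,e]"] assms by simp
    qed
  qed
qed

lemma move_seq_eq_move_seq_from:
  assumes "set (a # xs) \<subseteq> Omega" "e \<in> Omega"
  obtains ys where "set ys \<subseteq> Omega" "move_seq Bs (a # xs) = move_seq Bs (e # ys)"
  using assms
proof (induction xs arbitrary: a e thesis)
  case Nil
  then show ?case using Nil.prems(1)[of "[]"] by simp
next
  case (Cons b xs)
  have a: "a \<in> Omega" and bxs: "set (b # xs) \<subseteq> Omega" using Cons.prems(2) by auto
  obtain ys1 where ys1: "set ys1 \<subseteq> Omega" "move Bs a b = move_seq Bs (e # ys1)"
    using move_eq_move_seq_from[of a b e] a bxs Cons.prems(3) by auto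
  define k where "k = last (e # ys1)"
  have "k \<in> Omega" using ys1(1) Cons.prems(3) last_in_set[of "e # ys1"] unfolding k_def by auto
  then obtain ys2 where ys2: "set ys2 \<subseteq> Omega" "move_seq Bs (b # xs) = move_seq Bs (k # ys2)"
    using Cons.IH bxs by blast
  have "move_seq Bs (a # b # xs) = move_seq Bs (k # ys2) \<circ> move_seq Bs (e # ys1)"
    using ys1(2) ys2(2) by simp
  also have "\<dots> = move_seq Bs (e # ys1 @ ys2)" by (rule move_seq_concat) (simp add: k_def)
  finally show ?case using Cons.prems(1)[of "ys1 @ ys2"] ys1(1) ys2(1) by simp
qed

lemma moves_L_eq_moves_L_at:
  assumes "e \<in> Omega"
  shows "moves_L Omega Bs = moves_L_at Omega Bs e"
proof
  show "moves_L Omega Bs \<subseteq> moves_L_at Omega Bs e"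
  proof
    fix g assume "g \<in> moves_L Omega Bs"
    then obtain a xs where "g = move_seq Bs (a # xs)" "set (a # xs) \<subseteq> Omega"
      unfolding moves_L_def by auto
    with assms obtain ys where "set ys \<subseteq> Omega" "g = move_seq Bs (e # ys)"
      by (metis move_seq_eq_move_seq_from)
    then show "g \<in> moves_L_at Omega Bs e" unfolding moves_L_at_def by blast
  qed
  show "moves_L_at Omega Bs e \<subseteq> moves_L Omega Bs"
    using assms unfolding moves_L_def moves_L_at_def by blast
qed

lemma move_seq_automorphism: "set l \<subseteq> Omega \<Longrightarrow> is_automorphism Omega Bs (move_seq Bs l)"
proof (induction l rule: induct_list012)
  case (3 x y zs)
  then have "is_automorphism Omega Bs (move_seq Bs (y # zs) \<circ> move Bs x y)"
    by (intro is_automorphism_comp move_automorphism) simp_all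
  then show ?case by (simp only: move_seq.simps)
qed (simp_all add: is_automorphism_id)

lemma move_seq_rev_comp: "move_seq Bs (rev l) \<circ> move_seq Bs l = id"
proof (induction l rule: induct_list012)
  case (3 x y ys)
  have "move_seq Bs (rev (x # y # ys)) = move Bs y x \<circ> move_seq Bs (rev (y # ys))"
    using move_seq_snoc[of Bs "rev ys" y x] by simp
  then have "move_seq Bs (rev (x # y # ys)) \<circ> move_seq Bs (x # y # ys)
      = move Bs y x \<circ> (move_seq Bs (rev (y # ys)) \<circ> move_seq Bs (y # ys)) \<circ> move Bs x y"
    by (simp add: comp_assoc)
  also have "\<dots> = id" using 3(2) by (simp add: fun_eq_iff move_commute[of y x])
  finally show ?case .
qed simp_all

lemma move_seq_in_moves_L: "set (a # xs) \<subseteq> Omega \<Longrightarrow> move_seq Bs (a # xs) \<in> moves_L Omega Bs"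
  unfolding moves_L_def by auto

lemma moves_L_comp_closed:
  assumes "g \<in> moves_L Omega Bs" "h \<in> moves_L Omega Bs"
  shows "h \<circ> g \<in> moves_L Omega Bs"
proof -
  obtain a xs c ys where g: "g = move_seq Bs (a # xs)" "set (a # xs) \<subseteq> Omega"
    and h: "h = move_seq Bs (c # ys)" "set (c # ys) \<subseteq> Omega"
    using assms unfolding moves_L_def by auto
  have "last (a # xs) \<in> Omega" using g(2) last_in_set[of "a # xs"] by blast
  then obtain zs where zs: "set zs \<subseteq> Omega" "move_seq Bs (c # ys) = move_seq Bs (last (a # xs) # zs)"
    by (rule move_seq_eq_move_seq_from[OF h(2)])
  have "h \<circ> g = move_seq Bs (a # xs @ zs)"
    unfolding h(1) zs(2) g(1) by (rule move_seq_concat) simp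
  moreover have "set (a # xs @ zs) \<subseteq> Omega" using g(2) zs(1) by simp
  ultimately show ?thesis by (simp add: move_seq_in_moves_L)
qed

lemma moves_L_inv_closed:
  assumes "g \<in> moves_L Omega Bs"
  shows "inv g \<in> moves_L Omega Bs"
proof -
  obtain a xs where g: "g = move_seq Bs (a # xs)" "set (a # xs) \<subseteq> Omega"
    using assms unfolding moves_L_def by auto
  obtain c cs where rev: "rev (a # xs) = c # cs" by (cases "rev (a # xs)") auto
  have "inv g = move_seq Bs (rev (a # xs))"
    using move_seq_rev_comp[of "a # xs"] move_seq_rev_comp[of "rev (a # xs)"] g(1)
    by (intro inv_unique_comp) simp_all
  moreover have "set (c # cs) \<subseteq> Omega" using g(2) set_rev[of "a # xs"] unfolding rev by simp
  ultimately show ?thesis unfolding rev by (simp add: move_seq_in_moves_L)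
qed

lemma moves_L_automorphism_group:
  assumes "Omega \<noteq> {}"
  shows "is_automorphism_group Omega Bs (moves_L Omega Bs)"
proof -
  have "is_automorphism Omega Bs g" if "g \<in> moves_L Omega Bs" for g
    using that unfolding moves_L_def by (auto simp: move_seq_automorphism)
  moreover obtain e where "e \<in> Omega" using assms by blast
  then have "id \<in> moves_L Omega Bs" using move_seq_in_moves_L[of e "[]"] by simp
  ultimately show ?thesis
    unfolding is_automorphism_group_def using moves_L_comp_closed moves_L_inv_closed by blast
qed

end

theorem lemma4p5:
  fixes Omega :: "'a set" and Bs :: "'a set set" and n lam :: nat and oo x y z :: 'a
  assumes "is_2design Omega Bs n 4 lam"
    and "supersimple Bs"
    and "prop_triangle Bs"
    and "regular_two_graph Omega (collinear_triples Omega Bs)"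
    and "oo \<in> Omega"
    and "x \<in> Omega" "y \<in> Omega" "z \<in> Omega"
    and "x \<noteq> y" "y \<noteq> z" "x \<noteq> z"
  shows "(x \<in> line_closure Bs y z \<longrightarrow> perm_order (move Bs y z \<circ> move Bs x y) = 2)
       \<and> (x \<notin> line_closure Bs y z \<longrightarrow> perm_order (move Bs y z \<circ> move Bs x y) = 3)
       \<and> (x \<notin> line_closure Bs y z \<longrightarrow> move_seq Bs [z, x, y, z] = move Bs x y)
       \<and> moves_L Omega Bs = moves_L_at Omega Bs oo
       \<and> is_automorphism_group Omega Bs (moves_L Omega Bs)"
proof -
  interpret two_graph_design Omega Bs
    by (rule two_graph_designI[OF assms(1-4)])
  have closure: "x \<in> line_closure Bs y z \<longleftrightarrow> collinear y z x"
    unfolding line_closure_def collinear_def by simp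
  have "distinct [x,y,z]" using assms(9-11) by simp
  then show ?thesis
    using perm_order_moves_collinear[OF assms(7,8)] perm_order_moves_not_collinear[OF assms(6-8)]
      move_seq_braid[OF assms(6-8)] moves_L_eq_moves_L_at[OF assms(5)]
      moves_L_automorphism_group assms(5) closure
    by blast
qed

end
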